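(* Let $H:\mathcal{L}_{2e}^n\to\mathcal{L}_{2e}^n$ be a causal system, let $M=M^\top\in\mathbb{R}^{m\times m}$, and let $N$ be the causal, bounded LTI system with transfer function $N(s)=C_N(sI-A_N)^{-1}B_N+D_N$, where $A_N\in\mathbb{R}^{k\times k}$ is Hurwitz, $B_N\in\mathbb{R}^{k\times 2n}$, $C_N\in\mathbb{R}^{m\times k}$, $D_N\in\mathbb{R}^{m\times 2n}$. Suppose $H$ satisfies the hard incremental IQC with multipliers $(M,N)$. If there exist a symmetric matrix $\Pi\in\mathbb{R}^{2\times2}$, a matrix $P=P^\top\succeq 0$ and a number $\tau>0$ such that $$\begin{bmatrix} A_N^\top P+PA_N & PB_N\\ B_N^\top P & -\Pi\otimes I_n\end{bmatrix}+\tau V^\top M V\preceq 0,\qquad V=[C_N,\ D_N],$$ then $\mathrm{SRG}_e(H)$ is contained in $\mathcal{S}(\Pi)=\{z\in\mathbb{C}\mid [1;\ z]^*\,\Pi\,[1;\ z]\ge 0\}$.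
   Context: $\mathcal{L}_2^n$ is the space of square-integrable signals $u:[0,\infty)\to\mathbb{R}^n$ with norm $\|u\|=(\int_0^\infty u^\top u\,dt)^{1/2}$ and inner product $\langle u,y\rangle=\int_0^\infty u^\top y\,dt$; $\mathcal{L}_{2e}^n$ is the set of signals whose truncations $u_T$ ($u_T(t)=u(t)$ for $t\le T$, $0$ for $t>T$) lie in $\mathcal{L}_2^n$ for every $T\ge0$. A system is an operator $H:\mathcal{L}_{2e}^n\to\mathcal{L}_{2e}^n$ with $H0=0$; it is causal if $(Hu)_T=(Hu_T)_T$ for all $T\ge 0$ and $u$. The extended graph is $G_e(H)=\{(u,y)\in\mathcal{L}_{2e}^n\times\mathcal{L}_{2e}^n\mid y=Hu\}$. For $u,y\in\mathcal{L}_2^n$, the gain $\rho(u,y)$ is $\|y\|/\|u\|$ if $u\neq0$, $0$ if $u=y=0$, $\infty$ if $u=0\ne y$; the phase $\theta(u,y)=\arccos\frac{\langle u,y\rangle}{\|u\|\|y\|}$ if $u,y\ne0$, and $0$ otherwise; for $T>0$ set $\rho_T(u,y)=\rho(u_T,y_T)$, $\theta_T(u,y)=\theta(u_T,y_T)$. The hard scaled relative graph is $\mathrm{SRG}_e(H)=\{\rho_T(\Delta u,\Delta y)e^{\pm j\theta_T(\Delta u,\Delta y)}\mid (u_1,y_1),(u_2,y_2)\in G_e(H),\ (\Delta u)_T\ne0,\ T>0\}$ with $\Delta u=u_1-u_2$, $\Delta y=y_1-y_2$. $N$ acts on signals via its state-space realization $\dot x_N=A_Nx_N+B_N v$, $g=C_Nx_N+D_N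 v$ with $x_N(0)=0$. $H$ satisfies the hard incremental IQC with multipliers $(M,N)$ if $\int_0^T (N[\Delta u;\Delta y])^\top(t)\,M\,(N[\Delta u;\Delta y])(t)\,dt\ge 0$ for all $(u_1,y_1),(u_2,y_2)\in G_e(H)$ and all $T>0$. *)

theory Defs
  imports "HOL-Analysis.Analysis"
begin

text \<open>Signals are functions on the reals, taken to vanish for negative time
(so they live on [0, infinity)). L2e: measurable, and every truncation is square integrable.\<close>

definition L2e :: "(real \<Rightarrow> real^'n::finite) set" where
  "L2e = {u. u \<in> borel_measurable lborel \<and> (\<forall>t<0. u t = 0) \<and>
              (\<forall>T\<ge>0. set_integrable lborel {0..T} (\<lambda>t. (norm (u t))\<^sup>2))}"

definition trunc :: "real \<Rightarrow> (real \<Rightarrow> real^'n::finite) \<Rightarrow> (real \<Rightarrow> real^'n)" where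
  "trunc T u = (\<lambda>t. if t \<le> T then u t else 0)"

definition l2inner :: "(real \<Rightarrow> real^'n::finite) \<Rightarrow> (real \<Rightarrow> real^'n) \<Rightarrow> real" where
  "l2inner u y = (LINT t:{0..}|lborel. u t \<bullet> y t)"

definition l2norm :: "(real \<Rightarrow> real^'n::finite) \<Rightarrow> real" where
  "l2norm u = sqrt (l2inner u u)"

definition gain :: "(real \<Rightarrow> real^'n::finite) \<Rightarrow> (real \<Rightarrow> real^'n) \<Rightarrow> ereal" where
  "gain u y = (if l2norm u \<noteq> 0 then ereal (l2norm y / l2norm u)
               else if l2norm y = 0 then 0 else \<infinity>)"

definition phase :: "(real \<Rightarrow> real^'n::finite) \<Rightarrow> (real \<Rightarrow> real^'n) \<Rightarrow> real" where
  "phase u y = (if l2norm u \<noteq> 0 \<and> l2norm y \<noteq> 0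
                then arccos (l2inner u y / (l2norm u * l2norm y)) else 0)"

definition causal :: "((real \<Rightarrow> real^'n::finite) \<Rightarrow> (real \<Rightarrow> real^'n)) \<Rightarrow> bool" where
  "causal H \<longleftrightarrow> (\<forall>u\<in>L2e. \<forall>T\<ge>0. trunc T (H u) = trunc T (H (trunc T u)))"

definition is_system :: "((real \<Rightarrow> real^'n::finite) \<Rightarrow> (real \<Rightarrow> real^'n)) \<Rightarrow> bool" where
  "is_system H \<longleftrightarrow> (\<forall>u\<in>L2e. H u \<in> L2e) \<and> H (\<lambda>t. 0) = (\<lambda>t. 0)"

definition ext_graph :: "((real \<Rightarrow> real^'n::finite) \<Rightarrow> (real \<Rightarrow> real^'n))
    \<Rightarrow> ((real \<Rightarrow> real^'n) \<times> (real \<Rightarrow> real^'n)) set" where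
  "ext_graph H = {(u, H u) | u. u \<in> L2e}"

text \<open>Hard scaled relative graph (the gain is finite here since the truncated
input difference is nonzero).\<close>
definition SRGe :: "((real \<Rightarrow> real^'n::finite) \<Rightarrow> (real \<Rightarrow> real^'n)) \<Rightarrow> complex set" where
  "SRGe H = {complex_of_real (real_of_ereal (gain (trunc T (\<lambda>t. u1 t - u2 t)) (trunc T (\<lambda>t. y1 t - y2 t))))
               * cis (s * phase (trunc T (\<lambda>t. u1 t - u2 t)) (trunc T (\<lambda>t. y1 t - y2 t)))
             | u1 y1 u2 y2 T s. (u1, y1) \<in> ext_graph H \<and> (u2, y2) \<in> ext_graph H
                 \<and> l2norm (trunc T (\<lambda>t. u1 t - u2 t)) \<noteq> 0 \<and> T > 0 \<and> s \<in> {1, -1}}"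

definition nsd :: "real^'a::finite^'a \<Rightarrow> bool" where
  "nsd Q \<longleftrightarrow> (\<forall>x. x \<bullet> (Q *v x) \<le> 0)"

definition psd :: "real^'a::finite^'a \<Rightarrow> bool" where
  "psd Q \<longleftrightarrow> (\<forall>x. 0 \<le> x \<bullet> (Q *v x))"

definition hurwitz :: "real^'k::finite^'k \<Rightarrow> bool" where
  "hurwitz A \<longleftrightarrow> (\<forall>(ev::complex) (w::complex^'k). w \<noteq> 0 \<and>
       (\<chi> i. \<Sum>j\<in>UNIV. complex_of_real (A $ i $ j) * w $ j) = ev *s w \<longrightarrow> Re ev < 0)"

text \<open>Vectors in R^(2n) are indexed by the sum type 'n + 'n (first block Inl, second block Inr).\<close>
definition stack :: "real^'n::finite \<Rightarrow> real^'n \<Rightarrow> real^('n + 'n)" where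
  "stack a b = (\<chi> i. case i of Inl j \<Rightarrow> a $ j | Inr j \<Rightarrow> b $ j)"

definition blk :: "'n::finite + 'n \<Rightarrow> 2" where
  "blk i = (case i of Inl _ \<Rightarrow> 1 | Inr _ \<Rightarrow> 2)"

definition idx :: "'n::finite + 'n \<Rightarrow> 'n" where
  "idx i = (case i of Inl j \<Rightarrow> j | Inr j \<Rightarrow> j)"

definition kron_I :: "real^2^2 \<Rightarrow> real^('n::finite + 'n)^('n + 'n)" where
  "kron_I Pm = (\<chi> a b. Pm $ blk a $ blk b * (if idx a = idx b then 1 else 0))"

definition lmi_block :: "real^'k::finite^'k \<Rightarrow> real^('n::finite + 'n)^'k \<Rightarrow> real^'k^'k \<Rightarrow> real^2^2
      \<Rightarrow> real^('k + ('n + 'n))^('k + ('n + 'n))" where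
  "lmi_block A B P Pm = (\<chi> a b. case (a, b) of
      (Inl i, Inl j) \<Rightarrow> (transpose A ** P + P ** A) $ i $ j
    | (Inl i, Inr j) \<Rightarrow> (P ** B) $ i $ j
    | (Inr i, Inl j) \<Rightarrow> (transpose B ** P) $ i $ j
    | (Inr i, Inr j) \<Rightarrow> - (kron_I Pm) $ i $ j)"

definition hcat :: "real^'k::finite^'m::finite \<Rightarrow> real^'c::finite^'m \<Rightarrow> real^('k + 'c)^'m" where
  "hcat C D = (\<chi> r c. case c of Inl j \<Rightarrow> C $ r $ j | Inr j \<Rightarrow> D $ r $ j)"

text \<open>The region S(Pm): [1; z]^* Pm [1; z] \<ge> 0 (in the complex numbers: real and nonnegative).\<close>
definition S_region :: "real^2^2 \<Rightarrow> complex set" where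
  "S_region Pm = {z. let w = (vector [1, z] :: complex^2);
                      q = (\<Sum>i\<in>UNIV. \<Sum>j\<in>UNIV. cnj (w $ i) * complex_of_real (Pm $ i $ j) * w $ j)
                  in Im q = 0 \<and> 0 \<le> Re q}"

text \<open>x is the state of dx/dt = A x + B v, x(0) = 0 (absolutely continuous / integral form).\<close>
definition lti_state :: "real^'k::finite^'k \<Rightarrow> real^'c::finite^'k \<Rightarrow> (real \<Rightarrow> real^'c) \<Rightarrow> (real \<Rightarrow> real^'k) \<Rightarrow> bool" where
  "lti_state A B v x \<longleftrightarrow> x 0 = 0 \<and>
     (\<forall>t\<ge>0. ((\<lambda>s. A *v x s + B *v v s) has_integral x t) {0..t})"

definition lti_output :: "real^'k::finite^'k \<Rightarrow> real^'c::finite^'k \<Rightarrow> real^'k^'m::finite \<Rightarrow> real^'c^'m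
      \<Rightarrow> (real \<Rightarrow> real^'c) \<Rightarrow> (real \<Rightarrow> real^'m) \<Rightarrow> bool" where
  "lti_output A B C D v g \<longleftrightarrow>
     (\<exists>x. lti_state A B v x \<and> (\<forall>t\<ge>0. g t = C *v x t + D *v v t))"

definition hard_incr_IQC :: "((real \<Rightarrow> real^'n::finite) \<Rightarrow> (real \<Rightarrow> real^'n)) \<Rightarrow> real^'m::finite^'m
      \<Rightarrow> real^'k::finite^'k \<Rightarrow> real^('n + 'n)^'k \<Rightarrow> real^'k^'m \<Rightarrow> real^('n + 'n)^'m \<Rightarrow> bool" where
  "hard_incr_IQC H M A B C D \<longleftrightarrow>
     (\<forall>u1 y1 u2 y2 g T. (u1, y1) \<in> ext_graph H \<and> (u2, y2) \<in> ext_graph H \<and> T > 0 \<and>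
        lti_output A B C D (\<lambda>t. stack (u1 t - u2 t) (y1 t - y2 t)) g \<longrightarrow>
        0 \<le> (LINT t:{0..T}|lborel. g t \<bullet> (M *v g t)))"

end

theory Submission
  imports Defs
begin

(*
  For two input/output pairs of H put v = [u1 - u2; y1 - y2] and let x be the state of N driven
  by v from x(0) = 0, with output g = C x + D v.  Testing the LMI with [x; v] gives pointwise
  2 x'P (A x + B v) + tau g'M g <= v'(Pm (x) I) v.  Integrated over [0, T], the first term becomes
  x(T)'P x(T) >= 0 and the second is nonnegative by the hard IQC, so
  Pm11 |du_T|^2 + 2 Pm12 <du_T, dy_T> + Pm22 |dy_T|^2 >= 0.  The SRG point z of the truncated pair
  satisfies Re z |du_T|^2 = <du_T, dy_T> and |z| |du_T| = |dy_T|, and dividing by |du_T|^2 gives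
  [1; z]^* Pm [1; z] >= 0.

  What is needed is a state of N for every square-integrable input (built as
  the Picard series), and the identity 2 int_0^T x'P dx = x(T)'P x(T) for the merely absolutely
  continuous x (integration by parts via Fubini).
*)

section \<open>Integration by parts for indefinite integrals\<close>

lemma set_integrable_sum:
  fixes f :: "'i \<Rightarrow> 'a \<Rightarrow> 'b::{banach, second_countable_topology}"
  assumes "finite I" "\<And>i. i \<in> I \<Longrightarrow> set_integrable M A (f i)"
  shows "set_integrable M A (\<lambda>x. \<Sum>i\<in>I. f i x)"
  unfolding set_integrable_def scaleR_sum_right
  by (rule Bochner_Integration.integrable_sum) (use assms in \<open>simp add: set_integrable_def\<close>)

lemma set_integral_sum:
  fixes f :: "'i \<Rightarrow> 'a \<Rightarrow> real"
  assumes "finite I" "\<And>i. i \<in> I \<Longrightarrow> set_integrable M A (f i)"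
  shows "(LINT x:A|M. (\<Sum>i\<in>I. f i x)) = (\<Sum>i\<in>I. LINT x:A|M. f i x)"
  unfolding set_lebesgue_integral_def scaleR_sum_right
  by (rule Bochner_Integration.integral_sum) (use assms in \<open>simp add: set_integrable_def\<close>)

lemma set_integral_nonneg:
  fixes f :: "'a \<Rightarrow> real"
  assumes "\<And>t. t \<in> A \<Longrightarrow> 0 \<le> f t"
  shows "0 \<le> (LINT t:A|M. f t)"
  unfolding set_lebesgue_integral_def
  by (rule Bochner_Integration.integral_nonneg) (use assms in \<open>auto simp: indicator_def\<close>)

lemma integral_split_at:
  fixes h :: "real \<Rightarrow> real"
  assumes "integrable lborel h"
  shows "(LBINT r. h r * indicator {..s} r) + (LBINT r. h r * indicator {s<..} r) = (LBINT r. h r)"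
proof -
  have "(LBINT r. h r * indicator {..s} r) + (LBINT r. h r * indicator {s<..} r)
      = (LBINT r. h r * indicator {..s} r + h r * indicator {s<..} r)"
    using assms by (intro Bochner_Integration.integral_add[symmetric] integrable_real_mult_indicator) auto
  also have "\<dots> = (LBINT r. h r)"
    by (rule Bochner_Integration.integral_cong) (auto simp: indicator_def)
  finally show ?thesis .
qed

lemma integral_product_split_diagonal:
  fixes f h :: "real \<Rightarrow> real"
  assumes f: "integrable lborel f" and h: "integrable lborel h"
  shows "integrable lborel (\<lambda>s. f s * (LBINT r. h r * indicator {..s} r))"
    and "integrable lborel (\<lambda>r. h r * (LBINT s. f s * indicator {..<r} s))"
    and "(LBINT s. f s * (LBINT r. h r * indicator {..s} r))
         + (LBINT r. h r * (LBINT s. f s * indicator {..<r} s))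
         = (LBINT s. f s) * (LBINT r. h r)"
proof -
  have [measurable]: "f \<in> borel_measurable lborel" "h \<in> borel_measurable lborel"
    using f h by auto
  have product: "integrable (lborel \<Otimes>\<^sub>M lborel) (\<lambda>(s, r). f s * h r)"
    by (rule lborel_pair.Fubini_integrable) (auto simp: abs_mult integrable_abs f h)
  have lower: "integrable (lborel \<Otimes>\<^sub>M lborel) (\<lambda>(s, r). f s * (h r * indicator {..s} r))"
    by (rule Bochner_Integration.integrable_bound[OF product]) (auto simp: indicator_def abs_mult)
  have upper: "integrable (lborel \<Otimes>\<^sub>M lborel) (\<lambda>(s, r). f s * (h r * indicator {s<..} r))"
    by (rule Bochner_Integration.integrable_bound[OF product]) (auto simp: indicator_def abs_mult)
  have swap: "(LBINT s. f s * (h r * indicator {s<..} r)) = h r * (LBINT s. f s * indicator {..<r} s)"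
    for r
  proof -
    have "(LBINT s. f s * (h r * indicator {s<..} r)) = (LBINT s. h r * (f s * indicator {..<r} s))"
      by (rule Bochner_Integration.integral_cong) (auto simp: indicator_def)
    then show ?thesis by simp
  qed
  show lower_int: "integrable lborel (\<lambda>s. f s * (LBINT r. h r * indicator {..s} r))"
    using lborel_pair.integrable_fst[OF lower] by simp
  have upper_int: "integrable lborel (\<lambda>s. f s * (LBINT r. h r * indicator {s<..} r))"
    using lborel_pair.integrable_fst[OF upper] by simp
  show "integrable lborel (\<lambda>r. h r * (LBINT s. f s * indicator {..<r} s))"
    using lborel_pair.integrable_snd[OF upper] by (simp add: swap)
  have "(LBINT r. h r * (LBINT s. f s * indicator {..<r} s))
      = (LBINT r. LBINT s. f s * (h r * indicator {s<..} r))"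
    by (simp add: swap)
  also have "\<dots> = (LBINT s. f s * (LBINT r. h r * indicator {s<..} r))"
    using lborel_pair.Fubini_integral[OF upper] by simp
  finally have upper_eq: "(LBINT r. h r * (LBINT s. f s * indicator {..<r} s))
      = (LBINT s. f s * (LBINT r. h r * indicator {s<..} r))" .
  have "(LBINT s. f s * (LBINT r. h r * indicator {..s} r))
      + (LBINT s. f s * (LBINT r. h r * indicator {s<..} r))
      = (LBINT s. f s * (LBINT r. h r))"
    using lower_int upper_int
    by (simp add: Bochner_Integration.integral_add[symmetric] integral_split_at[OF h] distrib_left[symmetric])
  then show "(LBINT s. f s * (LBINT r. h r * indicator {..s} r))
      + (LBINT r. h r * (LBINT s. f s * indicator {..<r} s))
      = (LBINT s. f s) * (LBINT r. h r)"
    by (simp add: upper_eq)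
qed

lemma set_integral_by_parts_indefinite:
  fixes f h :: "real \<Rightarrow> real"
  assumes f: "set_integrable lborel {a..b} f" and h: "set_integrable lborel {a..b} h"
  shows "set_integrable lborel {a..b} (\<lambda>s. f s * (LINT r:{a..s}|lborel. h r))"
    and "set_integrable lborel {a..b} (\<lambda>s. (LINT r:{a..s}|lborel. f r) * h s)"
    and "(LINT s:{a..b}|lborel. f s * (LINT r:{a..s}|lborel. h r))
         + (LINT s:{a..b}|lborel. (LINT r:{a..s}|lborel. f r) * h s)
         = (LINT r:{a..b}|lborel. f r) * (LINT r:{a..b}|lborel. h r)"
proof -
  define f' where "f' = (\<lambda>s. indicator {a..b} s * f s)"
  define h' where "h' = (\<lambda>s. indicator {a..b} s * h s)"
  have f': "integrable lborel f'" and h': "integrable lborel h'"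
    using f h by (simp_all add: f'_def h'_def set_integrable_def)
  note split = integral_product_split_diagonal[OF f' h']
  have h_eq: "(LINT r:{a..s}|lborel. h r) = (LBINT r. h' r * indicator {..s} r)" if "s \<in> {a..b}" for s
    unfolding h'_def set_lebesgue_integral_def
    by (rule Bochner_Integration.integral_cong) (use that in \<open>auto simp: indicator_def\<close>)
  have f_eq: "(LINT r:{a..s}|lborel. f r) = (LBINT r. f' r * indicator {..<s} r)" if "s \<in> {a..b}" for s
  proof -
    have "(LINT r:{a..s}|lborel. f r) = (LBINT r. f' r * indicator {..s} r)"
      unfolding f'_def set_lebesgue_integral_def
      by (rule Bochner_Integration.integral_cong) (use that in \<open>auto simp: indicator_def\<close>)
    also have "\<dots> = (LBINT r. f' r * indicator {..<s} r)"
    proof (rule integral_cong_AE)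
      show "AE r in lborel. f' r * indicator {..s} r = f' r * indicator {..<s} r"
        using AE_lborel_singleton[of s] by eventually_elim (auto simp: indicator_def)
    qed (use f' in auto)
    finally show ?thesis .
  qed
  have lower: "(\<lambda>s. indicator {a..b} s *\<^sub>R (f s * (LINT r:{a..s}|lborel. h r)))
      = (\<lambda>s. f' s * (LBINT r. h' r * indicator {..s} r))"
    using h_eq by (auto simp: fun_eq_iff f'_def indicator_def)
  have upper: "(\<lambda>s. indicator {a..b} s *\<^sub>R ((LINT r:{a..s}|lborel. f r) * h s))
      = (\<lambda>r. h' r * (LBINT s. f' s * indicator {..<r} s))"
    using f_eq by (auto simp: fun_eq_iff h'_def indicator_def)
  show "set_integrable lborel {a..b} (\<lambda>s. f s * (LINT r:{a..s}|lborel. h r))"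
    unfolding set_integrable_def lower by (rule split(1))
  show "set_integrable lborel {a..b} (\<lambda>s. (LINT r:{a..s}|lborel. f r) * h s)"
    unfolding set_integrable_def upper by (rule split(2))
  show "(LINT s:{a..b}|lborel. f s * (LINT r:{a..s}|lborel. h r))
      + (LINT s:{a..b}|lborel. (LINT r:{a..s}|lborel. f r) * h s)
      = (LINT r:{a..b}|lborel. f r) * (LINT r:{a..b}|lborel. h r)"
    unfolding set_lebesgue_integral_def[of lborel "{a..b}"] lower upper split(3)
    by (simp add: f'_def h'_def)
qed

lemma symmetric_matrix_nth:
  assumes "transpose Q = Q"
  shows "Q $ j $ i = Q $ i $ j"
  using arg_cong[OF assms, of "\<lambda>Q. Q $ i $ j"] by (simp add: transpose_def)

lemma quadratic_form_indefinite_integral: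
  fixes P :: "real^'k::finite^'k" and f x :: "real \<Rightarrow> real^'k"
  assumes P: "transpose P = P" and ab: "a \<le> b"
    and f: "\<And>i. set_integrable lborel {a..b} (\<lambda>s. f s $ i)"
    and x: "\<And>s i. s \<in> {a..b} \<Longrightarrow> x s $ i = (LINT r:{a..s}|lborel. f r $ i)"
  shows "set_integrable lborel {a..b} (\<lambda>s. x s \<bullet> (P *v f s))"
    and "x b \<bullet> (P *v x b) = 2 * (LINT s:{a..b}|lborel. x s \<bullet> (P *v f s))"
proof -
  define X where "X i s = (LINT r:{a..s}|lborel. f r $ i)" for i s
  define I where "I i j = (LINT s:{a..b}|lborel. X i s * f s $ j)" for i j
  note by_parts = set_integral_by_parts_indefinite[OF f f, folded X_def]
  have expand: "x s \<bullet> (P *v f s) = (\<Sum>i\<in>UNIV. \<Sum>j\<in>UNIV. P $ i $ j * (X i s * f s $ j))"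
    if "s \<in> {a..b}" for s
    using x[OF that] by (simp add: X_def inner_vec_def matrix_vector_mult_def sum_distrib_left mult_ac)
  have terms: "set_integrable lborel {a..b} (\<lambda>s. P $ i $ j * (X i s * f s $ j))" for i j
    using by_parts(2) by simp
  show "set_integrable lborel {a..b} (\<lambda>s. x s \<bullet> (P *v f s))"
  proof (rule set_integrable_cong[THEN iffD2, rotated 3])
    show "set_integrable lborel {a..b} (\<lambda>s. \<Sum>i\<in>UNIV. \<Sum>j\<in>UNIV. P $ i $ j * (X i s * f s $ j))"
      by (intro set_integrable_sum terms) auto
  qed (auto simp: expand)
  have "(LINT s:{a..b}|lborel. x s \<bullet> (P *v f s))
      = (LINT s:{a..b}|lborel. \<Sum>i\<in>UNIV. \<Sum>j\<in>UNIV. P $ i $ j * (X i s * f s $ j))"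
    by (rule set_lebesgue_integral_cong) (auto simp: expand)
  also have "\<dots> = (\<Sum>i\<in>UNIV. \<Sum>j\<in>UNIV. P $ i $ j * I i j)"
    by (simp add: set_integral_sum set_integrable_sum terms I_def)
  finally have integral: "(LINT s:{a..b}|lborel. x s \<bullet> (P *v f s))
      = (\<Sum>i\<in>UNIV. \<Sum>j\<in>UNIV. P $ i $ j * I i j)" .
  have I_swap: "I j i + I i j = X i b * X j b" for i j
    using by_parts(3)[of i j] ab by (simp add: I_def X_def mult.commute)
  have "x b \<bullet> (P *v x b) = (\<Sum>i\<in>UNIV. \<Sum>j\<in>UNIV. P $ i $ j * (X i b * X j b))"
    using x[of b] ab by (simp add: X_def inner_vec_def matrix_vector_mult_def sum_distrib_left mult_ac)
  also have "\<dots> = (\<Sum>i\<in>UNIV. \<Sum>j\<in>UNIV. P $ i $ j * I j i) + (\<Sum>i\<in>UNIV. \<Sum>j\<in>UNIV. P $ i $ j * I i j)"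
    by (simp add: I_swap[symmetric] distrib_left sum.distrib)
  also have "(\<Sum>i\<in>UNIV. \<Sum>j\<in>UNIV. P $ i $ j * I j i) = (\<Sum>i\<in>UNIV. \<Sum>j\<in>UNIV. P $ i $ j * I i j)"
    by (subst sum.swap) (simp add: symmetric_matrix_nth[OF P])
  finally show "x b \<bullet> (P *v x b) = 2 * (LINT s:{a..b}|lborel. x s \<bullet> (P *v f s))"
    by (simp add: integral)
qed

section \<open>The state of a linear system\<close>

primrec picard :: "real^'k::finite^'k \<Rightarrow> (real \<Rightarrow> real^'k) \<Rightarrow> nat \<Rightarrow> real \<Rightarrow> real^'k" where
  "picard A b 0 = (\<lambda>t. integral {0..t} b)"
| "picard A b (Suc n) = (\<lambda>t. integral {0..t} (\<lambda>s. A *v picard A b n s))"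

lemma picard_at_0 [simp]: "picard A b n 0 = 0"
  by (cases n) auto

lemma continuous_on_matrix_vector_mult:
  "continuous_on S f \<Longrightarrow> continuous_on S (\<lambda>s. (A::real^'k::finite^'m::finite) *v f s)"
  using bounded_linear.continuous_on[OF matrix_vector_mul_bounded_linear] by blast

lemma picard_continuous:
  assumes b: "\<And>t. b integrable_on {0..t}"
  shows "continuous_on {0..T} (picard A b n)"
proof (induction n)
  case 0
  show ?case using indefinite_integral_continuous_1[OF b] by simp
next
  case (Suc n)
  have "(\<lambda>s. A *v picard A b n s) integrable_on {0..T}"
    by (rule integrable_continuous_real[OF continuous_on_matrix_vector_mult[OF Suc]])
  then show ?case using indefinite_integral_continuous_1 by simp
qed

lemma picard_integrable:
  assumes "\<And>t. b integrable_on {0..t}"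
  shows "(\<lambda>s. A *v picard A b n s) integrable_on {0..T}"
  by (rule integrable_continuous_real[OF continuous_on_matrix_vector_mult[OF picard_continuous[OF assms]]])

lemma has_integral_exp_series_term:
  fixes a c t :: real
  assumes "0 \<le> t"
  shows "((\<lambda>s. c * (a * s)^n / fact n * a) has_integral c * (a * t)^Suc n / fact (Suc n)) {0..t}"
proof -
  define K where "K = c * a^Suc n / fact (Suc n)"
  have K: "c * (a * s)^n / fact n * a = K * (real (Suc n) * s^n)" for s
    by (simp add: K_def fact_Suc power_mult_distrib field_simps del: of_nat_Suc)
  have "((\<lambda>s. K * s^Suc n) has_real_derivative K * (real (Suc n) * s^n)) (at s)" for s
    by (intro DERIV_cmult DERIV_pow[THEN DERIV_cong]) auto
  then have "((\<lambda>s. K * (real (Suc n) * s^n)) has_integral K * t^Suc n - K * 0^Suc n) {0..t}"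
    by (intro fundamental_theorem_of_calculus assms)
       (auto simp: has_real_derivative_iff_has_vector_derivative[symmetric] intro: has_field_derivative_at_within)
  moreover have "K * t^Suc n - K * 0^Suc n = c * (a * t)^Suc n / fact (Suc n)"
    by (simp add: K_def power_mult_distrib)
  ultimately show ?thesis by (simp only: K)
qed

lemma matrix_vector_mult_onorm_bound:
  fixes A :: "real^'n::finite^'m::finite"
  shows "0 \<le> onorm ((*v) A)" and "norm (A *v y) \<le> onorm ((*v) A) * norm y"
  by (simp_all add: onorm_pos_le onorm matrix_vector_mul_bounded_linear)

lemma picard_norm_le:
  assumes b: "\<And>t. b integrable_on {0..t}" and nb: "\<And>t. (\<lambda>s. norm (b s)) integrable_on {0..t}"
    and A: "\<And>y. norm (A *v y) \<le> a * norm y" and a: "0 \<le> a"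
    and s: "s \<in> {0..t}"
  shows "norm (picard A b n s) \<le> integral {0..t} (\<lambda>r. norm (b r)) * (a * s)^n / fact n"
  using s
proof (induction n arbitrary: s)
  case 0
  have "norm (integral {0..s} b) \<le> integral {0..s} (\<lambda>r. norm (b r))"
    by (rule integral_norm_bound_integral[OF b nb]) simp
  also have "\<dots> \<le> integral {0..t} (\<lambda>r. norm (b r))"
    using 0 by (intro integral_subset_le nb) auto
  finally show ?case by simp
next
  case (Suc n)
  let ?\<beta> = "integral {0..t} (\<lambda>r. norm (b r))"
  have s: "0 \<le> s" using Suc.prems by simp
  have "norm (picard A b (Suc n) s) \<le> integral {0..s} (\<lambda>r. ?\<beta> * (a * r)^n / fact n * a)"
    unfolding picard.simps
  proof (rule integral_norm_bound_integral[OF picard_integrable[OF b]])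
    show "(\<lambda>r. ?\<beta> * (a * r)^n / fact n * a) integrable_on {0..s}"
      using has_integral_exp_series_term[OF s] by blast
    fix r assume r: "r \<in> {0..s}"
    have "norm (A *v picard A b n r) \<le> a * norm (picard A b n r)" by (rule A)
    also have "\<dots> \<le> a * (?\<beta> * (a * r)^n / fact n)"
      using Suc.IH[of r] Suc.prems r a by (intro mult_left_mono) auto
    finally show "norm (A *v picard A b n r) \<le> ?\<beta> * (a * r)^n / fact n * a"
      by (simp add: mult.commute)
  qed
  also have "\<dots> = ?\<beta> * (a * s)^Suc n / fact (Suc n)"
    using has_integral_exp_series_term[OF s] by blast
  finally show ?case .
qed

lemma picard_uniform_bound:
  fixes A :: "real^'k::finite^'k"
  assumes b: "\<And>t. b integrable_on {0..t}" and nb: "\<And>t. (\<lambda>s. norm (b s)) integrable_on {0..t}"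
  obtains E where "summable E" and "\<And>n s. s \<in> {0..t} \<Longrightarrow> norm (picard A b n s) \<le> E n"
proof
  define a where "a = onorm ((*v) A)"
  note a = matrix_vector_mult_onorm_bound(1)[of A, folded a_def]
    and A = matrix_vector_mult_onorm_bound(2)[of A, folded a_def]
  define \<beta> where "\<beta> = integral {0..t} (\<lambda>r. norm (b r))"
  show "summable (\<lambda>n. \<beta> * (a * t)^n / fact n)"
    using summable_mult[OF summable_exp[of "a * t"], of \<beta>] by (simp add: divide_inverse mult_ac)
  fix n s assume s: "s \<in> {0..t}"
  have "0 \<le> \<beta>" unfolding \<beta>_def using s by (intro integral_nonneg nb) auto
  moreover have "(a * s)^n \<le> (a * t)^n" using s a by (intro power_mono mult_left_mono) auto
  ultimately have "\<beta> * (a * s)^n / fact n \<le> \<beta> * (a * t)^n / fact n"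
    by (intro divide_right_mono mult_left_mono) auto
  then show "norm (picard A b n s) \<le> \<beta> * (a * t)^n / fact n"
    using picard_norm_le[OF b nb A a s, of n] unfolding \<beta>_def by linarith
qed

lemma picard_series_sums:
  assumes b: "\<And>t. b integrable_on {0..t}" and nb: "\<And>t. (\<lambda>s. norm (b s)) integrable_on {0..t}"
    and s: "0 \<le> s"
  shows "(\<lambda>n. picard A b n s) sums (\<Sum>n. picard A b n s)"
proof -
  obtain E where E: "summable E" and bound: "\<And>n r. r \<in> {0..s} \<Longrightarrow> norm (picard A b n r) \<le> E n"
    using picard_uniform_bound[OF b nb, of s A] by metis
  have "summable (\<lambda>n. norm (picard A b n s))"
    by (rule summable_comparison_test'[OF E, of 0]) (use bound s in simp)
  then show ?thesis
    by (rule summable_sums[OF summable_norm_cancel])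
qed

lemma picard_series_has_integral:
  fixes A :: "real^'k::finite^'k"
  assumes b: "\<And>t. b integrable_on {0..t}" and nb: "\<And>t. (\<lambda>s. norm (b s)) integrable_on {0..t}"
    and t: "0 \<le> t"
  shows "((\<lambda>s. A *v (\<Sum>n. picard A b n s) + b s) has_integral (\<Sum>n. picard A b n t)) {0..t}"
proof -
  obtain E where E: "summable E" and bound: "\<And>n s. s \<in> {0..t} \<Longrightarrow> norm (picard A b n s) \<le> E n"
    using picard_uniform_bound[OF b nb, of t A] by metis
  have E_nonneg: "0 \<le> E n" for n
    using order_trans[OF norm_ge_zero bound[of t n]] t by simp
  define x where "x s = (\<Sum>n. picard A b n s)" for s
  have sums: "(\<lambda>n. picard A b n s) sums x s" if "s \<in> {0..t}" for s
    using picard_series_sums[OF b nb] that by (simp add: x_def)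
  define a where "a = onorm ((*v) A)"
  note a = matrix_vector_mult_onorm_bound(1)[of A, folded a_def]
    and A = matrix_vector_mult_onorm_bound(2)[of A, folded a_def]
  define F where "F N s = A *v (\<Sum>n<N. picard A b n s)" for N s
  have F_sum: "F N = (\<lambda>s. \<Sum>n<N. A *v picard A b n s)" for N
    by (simp add: F_def fun_eq_iff vec.sum)
  have F_integral: "(F N has_integral (\<Sum>n<N. picard A b (Suc n) t)) {0..t}" for N
    unfolding F_sum picard.simps
    by (intro has_integral_sum finite_lessThan integrable_integral picard_integrable[OF b])
  have F_bound: "norm (F N s) \<le> a * suminf E" if s: "s \<in> {0..t}" for N s
  proof -
    have "norm (\<Sum>n<N. picard A b n s) \<le> (\<Sum>n<N. E n)"
      using bound[OF s] by (intro order_trans[OF norm_sum sum_mono])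
    also have "\<dots> \<le> suminf E"
      using E E_nonneg by (intro sum_le_suminf) auto
    finally show ?thesis
      unfolding F_def by (rule order_trans[OF A mult_left_mono[OF _ a]])
  qed
  have F_lim: "(\<lambda>N. F N s) \<longlonglongrightarrow> A *v x s" if "s \<in> {0..t}" for s
    unfolding F_def using sums[OF that] unfolding sums_def
    by (rule bounded_linear.tendsto[OF matrix_vector_mul_bounded_linear])
  note limit = dominated_convergence[where h = "\<lambda>_. a * suminf E",
      OF has_integral_integrable[OF F_integral] integrable_const_ivl F_bound F_lim]
  have "(\<lambda>n. picard A b (Suc n) t) sums (x t - picard A b 0 t)"
    using sums[of t] t by (subst sums_Suc_iff) simp
  then have "(\<lambda>N. integral {0..t} (F N)) \<longlonglongrightarrow> x t - picard A b 0 t"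
    unfolding integral_unique[OF F_integral] sums_def .
  then have "integral {0..t} (\<lambda>s. A *v x s) = x t - picard A b 0 t"
    using limit(2) by (rule LIMSEQ_unique[rotated])
  then have "((\<lambda>s. A *v x s) has_integral x t - integral {0..t} b) {0..t}"
    using limit(1) by (simp add: has_integral_integral)
  from has_integral_add[OF this integrable_integral[OF b]] show ?thesis
    by (simp add: x_def)
qed

lemma lti_state_exists:
  fixes A :: "real^'k::finite^'k" and B :: "real^'c::finite^'k"
  assumes v: "\<And>t. set_integrable lborel {0..t} v"
  shows "\<exists>x. lti_state A B v x"
proof
  define b where "b = (\<lambda>s. B *v v s)"
  have "set_integrable lborel {0..t} b" for t
    using integrable_bounded_linear[OF matrix_vector_mul_bounded_linear v[unfolded set_integrable_def]]
    by (simp add: b_def set_integrable_def matrix_vector_mult_scaleR)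
  then have b: "b integrable_on {0..t}" and nb: "(\<lambda>s. norm (b s)) integrable_on {0..t}" for t
    by (auto intro: set_borel_integral_eq_integral(1) set_integrable_norm)
  show "lti_state A B v (\<lambda>t. \<Sum>n. picard A b n t)"
    unfolding lti_state_def using picard_series_has_integral[OF b nb] by (simp add: b_def)
qed

lemma lti_state_continuous:
  assumes "lti_state A B v x"
  shows "continuous_on {0..T} x"
proof (cases "0 \<le> T")
  case True
  let ?f = "\<lambda>s. A *v x s + B *v v s"
  have "?f integrable_on {0..T}"
    using assms True unfolding lti_state_def by blast
  then have "continuous_on {0..T} (\<lambda>t. integral {0..t} ?f)"
    by (rule indefinite_integral_continuous_1)
  moreover have "integral {0..t} ?f = x t" if "t \<in> {0..T}" for t
    using assms that unfolding lti_state_def by (simp add: integral_unique)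
  ultimately show ?thesis
    by (rule continuous_on_eq)
qed simp

lemma lti_state_component_eq_set_integral:
  assumes x: "lti_state A B v x" and s: "0 \<le> s"
    and int: "set_integrable lborel {0..s} (\<lambda>r. (A *v x r + B *v v r) $ i)"
  shows "x s $ i = (LINT r:{0..s}|lborel. (A *v x r + B *v v r) $ i)"
proof -
  have "((\<lambda>r. A *v x r + B *v v r) has_integral x s) {0..s}"
    using x s unfolding lti_state_def by simp
  from has_integral_linear[OF this bounded_linear_vec_nth[of i]]
  have "((\<lambda>r. (A *v x r + B *v v r) $ i) has_integral x s $ i) {0..s}"
    by (simp add: o_def)
  then show ?thesis
    using set_borel_integral_eq_integral(2)[OF int] by (simp add: integral_unique)
qed

section \<open>Square-integrable signals\<close>

lemma set_borel_measurable_mult: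
  fixes f g :: "'a \<Rightarrow> real"
  assumes "set_borel_measurable M S f" "set_borel_measurable M S g"
  shows "set_borel_measurable M S (\<lambda>t. f t * g t)"
proof -
  have "(\<lambda>t. indicator S t *\<^sub>R (f t * g t)) = (\<lambda>t. (indicator S t *\<^sub>R f t) * (indicator S t *\<^sub>R g t))"
    by (auto simp: indicator_def)
  then show ?thesis
    using assms unfolding set_borel_measurable_def by (simp del: scaleR_conv_of_real)
qed

lemma set_borel_measurable_add:
  fixes f g :: "'a \<Rightarrow> real"
  assumes "set_borel_measurable M S f" "set_borel_measurable M S g"
  shows "set_borel_measurable M S (\<lambda>t. f t + g t)"
  using borel_measurable_add assms unfolding set_borel_measurable_def scaleR_add_right by blast

definition square_integrable :: "real set \<Rightarrow> (real \<Rightarrow> real) \<Rightarrow> bool" where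
  "square_integrable S w \<longleftrightarrow>
     set_borel_measurable lborel S w \<and> set_integrable lborel S (\<lambda>t. (w t)\<^sup>2)"

lemma square_integrable_set_integrable_mult:
  assumes f: "square_integrable S f" and g: "square_integrable S g"
  shows "set_integrable lborel S (\<lambda>t. f t * g t)"
proof (rule set_integrable_bound)
  show "set_integrable lborel S (\<lambda>t. (f t)\<^sup>2 + (g t)\<^sup>2)"
    using f g unfolding square_integrable_def by auto
  show "set_borel_measurable lborel S (\<lambda>t. f t * g t)"
    using f g unfolding square_integrable_def by (intro set_borel_measurable_mult) auto
  have "\<bar>f t\<bar> * \<bar>g t\<bar> \<le> (f t)\<^sup>2 + (g t)\<^sup>2" for t
  proof -
    have "2 * (\<bar>f t\<bar> * \<bar>g t\<bar>) \<le> (f t)\<^sup>2 + (g t)\<^sup>2"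
      using sum_squares_bound[of "\<bar>f t\<bar>" "\<bar>g t\<bar>"] by (simp add: mult.assoc)
    moreover have "0 \<le> \<bar>f t\<bar> * \<bar>g t\<bar>" by simp
    ultimately show ?thesis by linarith
  qed
  then show "AE t in lborel. t \<in> S \<longrightarrow> norm (f t * g t) \<le> norm ((f t)\<^sup>2 + (g t)\<^sup>2)"
    by (simp add: abs_mult)
qed

lemma square_integrable_add:
  assumes f: "square_integrable S f" and g: "square_integrable S g"
  shows "square_integrable S (\<lambda>t. f t + g t)"
proof -
  have "set_integrable lborel S (\<lambda>t. (f t)\<^sup>2 + 2 * (f t * g t) + (g t)\<^sup>2)"
    using f g square_integrable_set_integrable_mult[OF f g] unfolding square_integrable_def by auto
  then show ?thesis
    using f g unfolding square_integrable_def
    by (auto intro: set_borel_measurable_add simp: power2_sum algebra_simps)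
qed

lemma square_integrable_cmult:
  assumes f: "square_integrable S f"
  shows "square_integrable S (\<lambda>t. c * f t)"
proof -
  have "(\<lambda>t. indicator S t *\<^sub>R f t) \<in> borel_measurable lborel"
    using f by (simp add: square_integrable_def set_borel_measurable_def)
  then have "(\<lambda>t. c * (indicator S t *\<^sub>R f t)) \<in> borel_measurable lborel"
    by (rule borel_measurable_times[OF borel_measurable_const])
  then have "set_borel_measurable lborel S (\<lambda>t. c * f t)"
    unfolding set_borel_measurable_def by (simp add: ac_simps)
  then show ?thesis
    using f unfolding square_integrable_def by (simp add: power_mult_distrib)
qed

lemma square_integrable_sum:
  assumes "finite I" "\<And>i. i \<in> I \<Longrightarrow> square_integrable S (f i)"
  shows "square_integrable S (\<lambda>t. \<Sum>i\<in>I. f i t)"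
  using assms
proof (induction I rule: finite_induct)
  case empty
  then show ?case
    by (simp add: square_integrable_def set_borel_measurable_def set_integrable_def)
qed (auto intro: square_integrable_add)

lemma continuous_on_imp_square_integrable:
  assumes "continuous_on {a..b} f"
  shows "square_integrable {a..b} f"
proof -
  have "continuous_on {a..b} (\<lambda>t. (f t)\<^sup>2)"
    using assms by (intro continuous_intros)
  then have "set_integrable lborel {a..b} (\<lambda>t. (f t)\<^sup>2)"
    by (rule borel_integrable_atLeastAtMost')
  moreover have "set_borel_measurable lborel {a..b} f"
    using set_measurable_continuous_on[OF _ assms] unfolding set_borel_measurable_def by simp
  ultimately show ?thesis unfolding square_integrable_def by simp
qed

lemma square_integrable_imp_set_integrable:
  assumes "square_integrable {a..b} f"
  shows "set_integrable lborel {a..b} f"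
  using square_integrable_set_integrable_mult[OF assms continuous_on_imp_square_integrable[of a b "\<lambda>t. 1"]]
  by simp

definition vec_square_integrable :: "real set \<Rightarrow> (real \<Rightarrow> real^'a::finite) \<Rightarrow> bool" where
  "vec_square_integrable S w \<longleftrightarrow> (\<forall>i. square_integrable S (\<lambda>t. w t $ i))"

lemma vec_square_integrable_add:
  "vec_square_integrable S f \<Longrightarrow> vec_square_integrable S g \<Longrightarrow> vec_square_integrable S (\<lambda>t. f t + g t)"
  unfolding vec_square_integrable_def by (auto intro: square_integrable_add)

lemma vec_square_integrable_diff:
  assumes "vec_square_integrable S f" "vec_square_integrable S g"
  shows "vec_square_integrable S (\<lambda>t. f t - g t)"
proof -
  have "square_integrable S (\<lambda>t. f t $ i + (-1) * g t $ i)" for i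
    using assms unfolding vec_square_integrable_def by (intro square_integrable_add square_integrable_cmult) auto
  then show ?thesis unfolding vec_square_integrable_def by simp
qed

lemma vec_square_integrable_matrix_vector_mult:
  "vec_square_integrable S f \<Longrightarrow> vec_square_integrable S (\<lambda>t. (M::real^'a::finite^'b::finite) *v f t)"
  unfolding vec_square_integrable_def matrix_vector_mult_def
  by (auto intro!: square_integrable_sum square_integrable_cmult)

lemma vec_square_integrable_stack:
  assumes "vec_square_integrable S p" "vec_square_integrable S q"
  shows "vec_square_integrable S (\<lambda>t. stack (p t) (q t))"
  unfolding vec_square_integrable_def
proof
  fix k :: "'a + 'a"
  show "square_integrable S (\<lambda>t. stack (p t) (q t) $ k)"
    using assms by (cases k) (simp_all add: stack_def vec_square_integrable_def)
qed

lemma vec_square_integrable_set_integrable_inner: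
  assumes "vec_square_integrable S f" "vec_square_integrable S g"
  shows "set_integrable lborel S (\<lambda>t. f t \<bullet> g t)"
  using assms unfolding vec_square_integrable_def inner_vec_def
  by (auto intro!: set_integrable_sum square_integrable_set_integrable_mult)

lemma continuous_on_imp_vec_square_integrable:
  assumes "continuous_on {a..b} f"
  shows "vec_square_integrable {a..b} f"
  unfolding vec_square_integrable_def
  using bounded_linear.continuous_on[OF bounded_linear_vec_nth assms]
  by (auto intro: continuous_on_imp_square_integrable)

lemma vec_square_integrable_imp_set_integrable:
  assumes "vec_square_integrable {a..b} w"
  shows "set_integrable lborel {a..b} w"
proof -
  have expansion: "(\<lambda>t. \<Sum>i\<in>UNIV. (w t $ i) *\<^sub>R axis i 1) = w"
  proof
    show "(\<Sum>i\<in>UNIV. (w t $ i) *\<^sub>R axis i 1) = w t" for t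
      using basis_expansion[of "w t"] by (simp add: scalar_mult_eq_scaleR)
  qed
  have "set_integrable lborel {a..b} (\<lambda>t. \<Sum>i\<in>UNIV. (w t $ i) *\<^sub>R axis i 1)"
    using assms unfolding vec_square_integrable_def
    by (intro set_integrable_sum set_integrable_scaleR_left square_integrable_imp_set_integrable) auto
  then show ?thesis by (rule back_subst[OF _ expansion])
qed

lemma L2e_imp_vec_square_integrable:
  assumes u: "u \<in> L2e"
  shows "vec_square_integrable {0..T} u"
proof (cases "0 \<le> T")
  case False
  then show ?thesis
    by (simp add: vec_square_integrable_def square_integrable_def set_borel_measurable_def set_integrable_def)
next
  case True
  show ?thesis
    unfolding vec_square_integrable_def square_integrable_def
  proof (intro allI conjI)
    fix i
    have "u \<in> borel_measurable lborel" using u unfolding L2e_def by simp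
    then have [measurable]: "(\<lambda>t. u t $ i) \<in> borel_measurable lborel"
      by (intro borel_measurable_continuous_on[where f = "\<lambda>x. x $ i"] continuous_intros)
    show "set_borel_measurable lborel {0..T} (\<lambda>t. u t $ i)"
      unfolding set_borel_measurable_def by measurable
    show "set_integrable lborel {0..T} (\<lambda>t. (u t $ i)\<^sup>2)"
    proof (rule set_integrable_bound)
      show "set_integrable lborel {0..T} (\<lambda>t. (norm (u t))\<^sup>2)"
        using u True unfolding L2e_def by simp
      show "set_borel_measurable lborel {0..T} (\<lambda>t. (u t $ i)\<^sup>2)"
        unfolding set_borel_measurable_def by measurable
      show "AE t in lborel. t \<in> {0..T} \<longrightarrow> norm ((u t $ i)\<^sup>2) \<le> norm ((norm (u t))\<^sup>2)"
        using power_mono[OF component_le_norm_cart abs_ge_zero, of "u _" i 2] by simp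
    qed
  qed
qed

lemma quadratic_nonneg_imp_discriminant_le:
  fixes a b c :: real
  assumes q: "\<And>l. 0 \<le> a - 2 * l * c + l\<^sup>2 * b" and b: "0 \<le> b"
  shows "c\<^sup>2 \<le> a * b"
proof (cases "b = 0")
  case True
  have "c = 0"
  proof (rule ccontr)
    assume "c \<noteq> 0"
    have "0 \<le> a - 2 * ((a + 1) / (2 * c)) * c" using q[of "(a + 1) / (2 * c)"] True by simp
    also have "\<dots> = -1" using \<open>c \<noteq> 0\<close> by (simp add: field_simps)
    finally show False by simp
  qed
  then show ?thesis using True by simp
next
  case False
  then have "0 < b" using b by simp
  have "0 \<le> a - 2 * (c / b) * c + (c / b)\<^sup>2 * b" by (rule q)
  also have "\<dots> = a - c\<^sup>2 / b" using \<open>0 < b\<close> by (simp add: field_simps power2_eq_square)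
  finally show ?thesis using \<open>0 < b\<close> by (simp add: field_simps mult.commute)
qed

lemma set_integral_inner_Cauchy_Schwarz:
  assumes p: "vec_square_integrable S p" and q: "vec_square_integrable S q"
  shows "(LINT t:S|lborel. p t \<bullet> q t)\<^sup>2
    \<le> (LINT t:S|lborel. p t \<bullet> p t) * (LINT t:S|lborel. q t \<bullet> q t)"
proof (rule quadratic_nonneg_imp_discriminant_le)
  show "0 \<le> (LINT t:S|lborel. q t \<bullet> q t)" by (rule set_integral_nonneg) simp
  fix l :: real
  have expand: "(p t - l *\<^sub>R q t) \<bullet> (p t - l *\<^sub>R q t)
      = p t \<bullet> p t - 2 * l * (p t \<bullet> q t) + l\<^sup>2 * (q t \<bullet> q t)" for t
    by (simp add: inner_commute power2_eq_square algebra_simps)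
  have "0 \<le> (LINT t:S|lborel. (p t - l *\<^sub>R q t) \<bullet> (p t - l *\<^sub>R q t))"
    by (rule set_integral_nonneg) simp
  also have "\<dots> = (LINT t:S|lborel. p t \<bullet> p t) - 2 * l * (LINT t:S|lborel. p t \<bullet> q t)
      + l\<^sup>2 * (LINT t:S|lborel. q t \<bullet> q t)"
    unfolding expand using p q
    by (simp add: vec_square_integrable_set_integrable_inner mult.assoc)
  finally show "0 \<le> (LINT t:S|lborel. p t \<bullet> p t) - 2 * l * (LINT t:S|lborel. p t \<bullet> q t)
      + l\<^sup>2 * (LINT t:S|lborel. q t \<bullet> q t)" .
qed

section \<open>Block matrices\<close>

lemma sum_UNIV_Plus:
  "sum g (UNIV :: ('a::finite + 'b::finite) set) = (\<Sum>i\<in>UNIV. g (Inl i)) + (\<Sum>j\<in>UNIV. g (Inr j))"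
  by (subst UNIV_Plus_UNIV[symmetric], subst sum.Plus) (auto simp: comp_def)

lemma inner_transpose_matrix_vector: "y \<bullet> (transpose M *v z) = (M *v y) \<bullet> (z::real^'a::finite)"
  by (metis dot_lmul_matrix vector_transpose_matrix)

lemma inner_symmetric_matrix_vector:
  assumes "transpose P = P"
  shows "x \<bullet> (P *v y) = y \<bullet> (P *v (x::real^'a::finite))"
  using inner_transpose_matrix_vector[of x P y] assms by (simp add: inner_commute)

definition vec_join :: "real^'a::finite \<Rightarrow> real^'b::finite \<Rightarrow> real^('a + 'b)" where
  "vec_join x v = (\<chi> a. case a of Inl i \<Rightarrow> x $ i | Inr j \<Rightarrow> v $ j)"

lemma inner_vec_join:
  "vec_join x v \<bullet> w = x \<bullet> (\<chi> i. w $ Inl i) + v \<bullet> (\<chi> j. w $ Inr j)"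
  by (simp add: vec_join_def inner_vec_def sum_UNIV_Plus)

lemma lmi_block_quadratic_form:
  assumes P: "transpose P = P"
  shows "vec_join x v \<bullet> (lmi_block A B P Pm *v vec_join x v)
    = 2 * (x \<bullet> (P *v (A *v x + B *v v))) - v \<bullet> (kron_I Pm *v v)"
proof -
  have upper: "(\<chi> i. (lmi_block A B P Pm *v vec_join x v) $ Inl i)
      = (transpose A ** P + P ** A) *v x + (P ** B) *v v"
    by (simp add: vec_eq_iff lmi_block_def matrix_vector_mult_def sum_UNIV_Plus vec_join_def)
  have lower: "(\<chi> j. (lmi_block A B P Pm *v vec_join x v) $ Inr j)
      = (transpose B ** P) *v x - kron_I Pm *v v"
    by (simp add: vec_eq_iff lmi_block_def matrix_vector_mult_def sum_UNIV_Plus vec_join_def sum_negf)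
  have "x \<bullet> (transpose A *v (P *v x)) = x \<bullet> (P *v (A *v x))"
    by (simp only: inner_transpose_matrix_vector inner_symmetric_matrix_vector[OF P, of x "A *v x"])
  moreover have "v \<bullet> (transpose B *v (P *v x)) = x \<bullet> (P *v (B *v v))"
    by (simp only: inner_transpose_matrix_vector inner_symmetric_matrix_vector[OF P, of x "B *v v"])
  ultimately show ?thesis
    unfolding inner_vec_join upper lower
    by (simp add: inner_add_right inner_diff_right matrix_vector_right_distrib
        matrix_vector_mult_add_rdistrib matrix_vector_mul_assoc[symmetric])
qed

lemma hcat_vec_join: "hcat C D *v vec_join x v = C *v x + D *v v"
  by (simp add: vec_eq_iff hcat_def matrix_vector_mult_def sum_UNIV_Plus vec_join_def)

lemma lmi_pointwise_dissipation:
  assumes P: "transpose P = P"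
    and lmi: "nsd (lmi_block A B P Pm + \<tau> *\<^sub>R (transpose (hcat C D) ** M ** hcat C D))"
  shows "2 * (x \<bullet> (P *v (A *v x + B *v v)))
      + \<tau> * ((C *v x + D *v v) \<bullet> (M *v (C *v x + D *v v))) \<le> v \<bullet> (kron_I Pm *v v)"
proof -
  let ?z = "vec_join x v" and ?Q = "transpose (hcat C D) ** M ** hcat C D"
  have "?z \<bullet> ((lmi_block A B P Pm + \<tau> *\<^sub>R ?Q) *v ?z)
      = ?z \<bullet> (lmi_block A B P Pm *v ?z) + \<tau> * (?z \<bullet> (?Q *v ?z))"
    by (simp only: matrix_vector_mult_add_rdistrib scaleR_matrix_vector_assoc[symmetric]
        inner_add_right inner_scaleR_right)
  also have "?z \<bullet> (?Q *v ?z) = (C *v x + D *v v) \<bullet> (M *v (C *v x + D *v v))"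
    by (simp only: matrix_vector_mul_assoc[symmetric] inner_transpose_matrix_vector hcat_vec_join)
  finally have "?z \<bullet> ((lmi_block A B P Pm + \<tau> *\<^sub>R ?Q) *v ?z)
      = 2 * (x \<bullet> (P *v (A *v x + B *v v))) - v \<bullet> (kron_I Pm *v v)
        + \<tau> * ((C *v x + D *v v) \<bullet> (M *v (C *v x + D *v v)))"
    by (simp only: lmi_block_quadratic_form[OF P])
  moreover have "?z \<bullet> ((lmi_block A B P Pm + \<tau> *\<^sub>R ?Q) *v ?z) \<le> 0"
    using lmi unfolding nsd_def by blast
  ultimately show ?thesis by linarith
qed

lemma inner_stack: "stack a b \<bullet> stack c d = a \<bullet> c + b \<bullet> d"
  by (simp add: stack_def inner_vec_def sum_UNIV_Plus)

lemma kron_I_stack: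
  "kron_I Pm *v stack a b = stack (Pm$1$1 *\<^sub>R a + Pm$1$2 *\<^sub>R b) (Pm$2$1 *\<^sub>R a + Pm$2$2 *\<^sub>R b)"
proof -
  have "(c * (if i = j then 1 else 0)) * y = (if i = j then c * y else 0)" for c y :: real and i j :: 'a
    by simp
  then show ?thesis
    unfolding vec_eq_iff
    by (auto split: sum.split simp: kron_I_def stack_def blk_def idx_def matrix_vector_mult_def
        sum_UNIV_Plus)
qed

lemma kron_I_quadratic_form:
  assumes "transpose Pm = Pm"
  shows "stack a b \<bullet> (kron_I Pm *v stack a b)
    = Pm$1$1 * (a \<bullet> a) + 2 * Pm$1$2 * (a \<bullet> b) + Pm$2$2 * (b \<bullet> b)"
proof -
  have "Pm$2$1 = Pm$1$2" by (rule symmetric_matrix_nth[OF assms])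
  then show ?thesis
    unfolding kron_I_stack inner_stack by (simp add: inner_commute algebra_simps)
qed

lemma set_integral_kron_I_quadratic_form:
  assumes "transpose Pm = Pm" and p: "vec_square_integrable S p" and q: "vec_square_integrable S q"
  shows "(LINT t:S|lborel. stack (p t) (q t) \<bullet> (kron_I Pm *v stack (p t) (q t)))
    = Pm$1$1 * (LINT t:S|lborel. p t \<bullet> p t) + 2 * Pm$1$2 * (LINT t:S|lborel. p t \<bullet> q t)
      + Pm$2$2 * (LINT t:S|lborel. q t \<bullet> q t)"
  using vec_square_integrable_set_integrable_inner[OF p p] vec_square_integrable_set_integrable_inner[OF p q]
    vec_square_integrable_set_integrable_inner[OF q q]
  by (simp add: kron_I_quadratic_form[OF assms(1)] mult.assoc)

section \<open>The dissipation inequality\<close>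

lemma dissipation_inequality:
  fixes A :: "real^'k::finite^'k" and B :: "real^('n::finite + 'n)^'k"
    and C :: "real^'k^'m::finite" and D :: "real^('n + 'n)^'m"
  assumes P: "transpose P = P"
    and lmi: "nsd (lmi_block A B P Pm + \<tau> *\<^sub>R (transpose (hcat C D) ** M ** hcat C D))"
    and v: "\<And>t. vec_square_integrable {0..t} v" and x: "lti_state A B v x" and T: "0 \<le> T"
  shows "x T \<bullet> (P *v x T)
      + \<tau> * (LINT t:{0..T}|lborel. (C *v x t + D *v v t) \<bullet> (M *v (C *v x t + D *v v t)))
    \<le> (LINT t:{0..T}|lborel. v t \<bullet> (kron_I Pm *v v t))"
proof -
  define f where "f s = A *v x s + B *v v s" for s
  define g where "g s = C *v x s + D *v v s" for s
  have x_sq: "vec_square_integrable {0..t} x" for t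
    by (rule continuous_on_imp_vec_square_integrable[OF lti_state_continuous[OF x]])
  have f_sq: "vec_square_integrable {0..t} f" for t
    unfolding f_def using x_sq v
    by (intro vec_square_integrable_add vec_square_integrable_matrix_vector_mult)
  have g_sq: "vec_square_integrable {0..t} g" for t
    unfolding g_def using x_sq v
    by (intro vec_square_integrable_add vec_square_integrable_matrix_vector_mult)
  have f_int: "set_integrable lborel {0..t} (\<lambda>s. f s $ i)" for t i
    using f_sq unfolding vec_square_integrable_def by (blast intro: square_integrable_imp_set_integrable)
  have x_eq: "x s $ i = (LINT r:{0..s}|lborel. f r $ i)" if "s \<in> {0..T}" for s i
    using lti_state_component_eq_set_integral[OF x, of s i] f_int that unfolding f_def by simp
  note energy = quadratic_form_indefinite_integral[OF P T f_int x_eq]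
  have pointwise: "2 * (x t \<bullet> (P *v f t)) + \<tau> * (g t \<bullet> (M *v g t)) \<le> v t \<bullet> (kron_I Pm *v v t)" for t
    unfolding f_def g_def by (rule lmi_pointwise_dissipation[OF P lmi])
  have g_int: "set_integrable lborel {0..T} (\<lambda>t. g t \<bullet> (M *v g t))"
    by (intro vec_square_integrable_set_integrable_inner vec_square_integrable_matrix_vector_mult g_sq)
  have "(LINT t:{0..T}|lborel. 2 * (x t \<bullet> (P *v f t)) + \<tau> * (g t \<bullet> (M *v g t)))
      = x T \<bullet> (P *v x T) + \<tau> * (LINT t:{0..T}|lborel. g t \<bullet> (M *v g t))"
    using energy g_int by (simp add: set_integral_add)
  moreover have "(LINT t:{0..T}|lborel. 2 * (x t \<bullet> (P *v f t)) + \<tau> * (g t \<bullet> (M *v g t)))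
      \<le> (LINT t:{0..T}|lborel. v t \<bullet> (kron_I Pm *v v t))"
    using energy(1) g_int pointwise
    by (intro set_integral_mono vec_square_integrable_set_integrable_inner
        vec_square_integrable_matrix_vector_mult v) auto
  ultimately show ?thesis
    unfolding g_def by linarith
qed

lemma ext_graph_differences_square_integrable:
  assumes "is_system H" and "(u1, y1) \<in> ext_graph H" "(u2, y2) \<in> ext_graph H"
  shows "vec_square_integrable {0..T} (\<lambda>t. u1 t - u2 t)"
    and "vec_square_integrable {0..T} (\<lambda>t. y1 t - y2 t)"
proof -
  have "u1 \<in> L2e" "u2 \<in> L2e" "y1 \<in> L2e" "y2 \<in> L2e"
    using assms unfolding ext_graph_def is_system_def by auto
  then show "vec_square_integrable {0..T} (\<lambda>t. u1 t - u2 t)"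
    and "vec_square_integrable {0..T} (\<lambda>t. y1 t - y2 t)"
    by (auto intro: vec_square_integrable_diff L2e_imp_vec_square_integrable)
qed

lemma incremental_supply_nonneg:
  fixes H :: "(real \<Rightarrow> real^'n::finite) \<Rightarrow> (real \<Rightarrow> real^'n)"
  assumes sys: "is_system H" and iqc: "hard_incr_IQC H M A B C D"
    and P: "transpose P = P" "psd P" and \<tau>: "0 \<le> \<tau>"
    and lmi: "nsd (lmi_block A B P Pm + \<tau> *\<^sub>R (transpose (hcat C D) ** M ** hcat C D))"
    and graph: "(u1, y1) \<in> ext_graph H" "(u2, y2) \<in> ext_graph H" and T: "0 < T"
  shows "0 \<le> (LINT t:{0..T}|lborel.
    stack (u1 t - u2 t) (y1 t - y2 t) \<bullet> (kron_I Pm *v stack (u1 t - u2 t) (y1 t - y2 t)))"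
proof -
  define v where "v t = stack (u1 t - u2 t) (y1 t - y2 t)" for t
  have v_sq: "vec_square_integrable {0..t} v" for t
    unfolding v_def
    by (intro vec_square_integrable_stack ext_graph_differences_square_integrable[OF sys graph(1,2)])
  obtain x where x: "lti_state A B v x"
    using lti_state_exists[OF vec_square_integrable_imp_set_integrable[OF v_sq]] by blast
  have "lti_output A B C D v (\<lambda>t. C *v x t + D *v v t)"
    unfolding lti_output_def using x by blast
  then have "0 \<le> (LINT t:{0..T}|lborel. (C *v x t + D *v v t) \<bullet> (M *v (C *v x t + D *v v t)))"
    using iqc[unfolded hard_incr_IQC_def] graph T unfolding v_def by blast
  then have "0 \<le> \<tau> * (LINT t:{0..T}|lborel. (C *v x t + D *v v t) \<bullet> (M *v (C *v x t + D *v v t)))"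
    using \<tau> by simp
  moreover have "0 \<le> x T \<bullet> (P *v x T)"
    using P(2) unfolding psd_def by blast
  moreover note dissipation_inequality[OF P(1) lmi v_sq x, of T]
  ultimately show ?thesis
    using T unfolding v_def by linarith
qed

section \<open>Gain, phase and the region S(Pm)\<close>

lemma l2inner_trunc: "l2inner (trunc T p) (trunc T q) = (LINT t:{0..T}|lborel. p t \<bullet> q t)"
  unfolding l2inner_def set_lebesgue_integral_def
  by (rule Bochner_Integration.integral_cong) (auto simp: trunc_def indicator_def)

lemma l2norm_trunc_power2: "(l2norm (trunc T p))\<^sup>2 = (LINT t:{0..T}|lborel. p t \<bullet> p t)"
  unfolding l2norm_def l2inner_trunc by (simp add: set_integral_nonneg)

lemma l2norm_nonneg: "0 \<le> l2norm u"
  unfolding l2norm_def l2inner_def by (simp add: set_integral_nonneg)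

lemma l2inner_trunc_Cauchy_Schwarz:
  assumes "vec_square_integrable {0..T} p" "vec_square_integrable {0..T} q"
  shows "\<bar>l2inner (trunc T p) (trunc T q)\<bar> \<le> l2norm (trunc T p) * l2norm (trunc T q)"
proof -
  have "(l2inner (trunc T p) (trunc T q))\<^sup>2 \<le> (l2norm (trunc T p))\<^sup>2 * (l2norm (trunc T q))\<^sup>2"
    unfolding l2inner_trunc l2norm_trunc_power2 by (rule set_integral_inner_Cauchy_Schwarz[OF assms])
  then have "\<bar>l2inner (trunc T p) (trunc T q)\<bar>\<^sup>2 \<le> (l2norm (trunc T p) * l2norm (trunc T q))\<^sup>2"
    by (simp add: power_mult_distrib)
  then show ?thesis
    by (rule power2_le_imp_le) (simp add: l2norm_nonneg)
qed

lemma gain_phase_polar: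
  fixes u y :: "real \<Rightarrow> real^'n::finite"
  assumes u: "l2norm u \<noteq> 0" and cs: "\<bar>l2inner u y\<bar> \<le> l2norm u * l2norm y" and s: "s \<in> {1, -1}"
  defines "z \<equiv> complex_of_real (real_of_ereal (gain u y)) * cis (s * phase u y)"
  shows "Re z * (l2norm u)\<^sup>2 = l2inner u y" and "cmod z * l2norm u = l2norm y"
proof -
  have z: "z = complex_of_real (l2norm y / l2norm u) * cis (s * phase u y)"
    using u by (simp add: z_def gain_def)
  show "cmod z * l2norm u = l2norm y"
    unfolding z norm_mult norm_of_real norm_cis using u l2norm_nonneg[of u] l2norm_nonneg[of y] by simp
  show "Re z * (l2norm u)\<^sup>2 = l2inner u y"
  proof (cases "l2norm y = 0")
    case True
    then show ?thesis using cs by (simp add: z phase_def)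
  next
    case False
    let ?c = "l2inner u y / (l2norm u * l2norm y)"
    have "\<bar>?c\<bar> \<le> 1"
      using cs u False l2norm_nonneg[of u] l2norm_nonneg[of y] by (simp add: abs_div pos_divide_le_eq)
    then have "cos (s * phase u y) = ?c"
      using s u False by (auto simp: phase_def cos_arccos_abs)
    then show ?thesis
      using u False by (simp add: z field_simps power2_eq_square)
  qed
qed

lemma S_region_iff:
  assumes "transpose Pm = Pm"
  shows "z \<in> S_region Pm \<longleftrightarrow> 0 \<le> Pm$1$1 + 2 * Pm$1$2 * Re z + Pm$2$2 * (cmod z)\<^sup>2"
proof -
  have "Pm$2$1 = Pm$1$2" by (rule symmetric_matrix_nth[OF assms])
  then show ?thesis
    unfolding cmod_power2 by (simp add: S_region_def sum_2 algebra_simps power2_eq_square)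
qed

lemma S_regionI:
  assumes "transpose Pm = Pm" and r: "r \<noteq> 0" and "Re z * r\<^sup>2 = c" and "cmod z * r = m"
    and "0 \<le> Pm$1$1 * r\<^sup>2 + 2 * Pm$1$2 * c + Pm$2$2 * m\<^sup>2"
  shows "z \<in> S_region Pm"
proof -
  have "(Pm$1$1 + 2 * Pm$1$2 * Re z + Pm$2$2 * (cmod z)\<^sup>2) * r\<^sup>2
      = Pm$1$1 * r\<^sup>2 + 2 * Pm$1$2 * c + Pm$2$2 * m\<^sup>2"
    by (simp flip: assms(3,4) add: power_mult_distrib algebra_simps)
  then have "0 \<le> (Pm$1$1 + 2 * Pm$1$2 * Re z + Pm$2$2 * (cmod z)\<^sup>2) * r\<^sup>2"
    using assms(5) by simp
  then show ?thesis
    using r by (simp add: S_region_iff[OF assms(1)] zero_le_mult_iff)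
qed

theorem theorem2:
  fixes H :: "(real \<Rightarrow> real^'n::finite) \<Rightarrow> (real \<Rightarrow> real^'n)"
    and M :: "real^'m::finite^'m"
    and A :: "real^'k::finite^'k" and B :: "real^('n + 'n)^'k"
    and C :: "real^'k^'m" and D :: "real^('n + 'n)^'m"
    and Pm :: "real^2^2" and P :: "real^'k^'k" and \<tau> :: real
  assumes "is_system H" and "causal H"
    and "transpose M = M"
    and "hurwitz A"
    and "hard_incr_IQC H M A B C D"
    and "transpose Pm = Pm"
    and "transpose P = P" and "psd P"
    and "\<tau> > 0"
    and "nsd (lmi_block A B P Pm + \<tau> *\<^sub>R (transpose (hcat C D) ** M ** hcat C D))"
  shows "SRGe H \<subseteq> S_region Pm"
proof
  fix z assume "z \<in> SRGe H"
  then obtain u1 y1 u2 y2 T s where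
    z: "z = complex_of_real (real_of_ereal (gain (trunc T (\<lambda>t. u1 t - u2 t)) (trunc T (\<lambda>t. y1 t - y2 t))))
        * cis (s * phase (trunc T (\<lambda>t. u1 t - u2 t)) (trunc T (\<lambda>t. y1 t - y2 t)))"
    and graph: "(u1, y1) \<in> ext_graph H" "(u2, y2) \<in> ext_graph H"
    and nonzero: "l2norm (trunc T (\<lambda>t. u1 t - u2 t)) \<noteq> 0" and T: "T > 0" and s: "s \<in> {1, -1}"
    unfolding SRGe_def by blast
  define du where "du t = u1 t - u2 t" for t
  define dy where "dy t = y1 t - y2 t" for t
  note sq = ext_graph_differences_square_integrable[OF assms(1) graph, of T, folded du_def dy_def]
  have "0 \<le> (LINT t:{0..T}|lborel. stack (du t) (dy t) \<bullet> (kron_I Pm *v stack (du t) (dy t)))"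
    using incremental_supply_nonneg[OF assms(1,5,7,8) _ assms(10) graph T] assms(9)
    unfolding du_def dy_def by simp
  then have supply_nonneg: "0 \<le> Pm$1$1 * (l2norm (trunc T du))\<^sup>2
      + 2 * Pm$1$2 * l2inner (trunc T du) (trunc T dy) + Pm$2$2 * (l2norm (trunc T dy))\<^sup>2"
    unfolding set_integral_kron_I_quadratic_form[OF assms(6) sq] l2inner_trunc l2norm_trunc_power2 .
  note polar = gain_phase_polar[OF nonzero[folded du_def] l2inner_trunc_Cauchy_Schwarz[OF sq] s]
  show "z \<in> S_region Pm"
    unfolding z du_def[symmetric] dy_def[symmetric]
    by (rule S_regionI[OF assms(6) nonzero[folded du_def] polar supply_nonneg])
qed

end
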